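(* Fix $0<\varepsilon<1$ and $K\in\mathbb N$. For all sufficiently large $N$ (relative to $\varepsilon,K$), there is an $N$-vertex graph $F$ with average degree at least $N^{\varepsilon}$ satisfying the following: if $H$ is a subgraph of $F$ with all degrees lying in the range $[d',Kd']$, then $$d'\le \frac{64K^3 N^{\varepsilon}}{\lfloor (1-\varepsilon)\log N-2\rfloor}.$$
   Context: Logarithms are base 2. $\mathbb N=\{1,2,\dots\}$. *)

theory Defs
  imports Complex_Main
begin

definition simple_graph :: "'a set \<Rightarrow> 'a set set \<Rightarrow> bool" where
  "simple_graph V E \<longleftrightarrow> finite V \<and> (\<forall>e\<in>E. e \<subseteq> V \<and> card e = 2)"

definition degree :: "'a set set \<Rightarrow> 'a \<Rightarrow> nat" where
  "degree E v = card {e \<in> E. v \<in> e}"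

definition avg_degree :: "'a set \<Rightarrow> 'a set set \<Rightarrow> real" where
  "avg_degree V E = 2 * real (card E) / real (card V)"

definition subgraph :: "'a set \<Rightarrow> 'a set set \<Rightarrow> 'a set \<Rightarrow> 'a set set \<Rightarrow> bool" where
  "subgraph W E' V E \<longleftrightarrow> W \<subseteq> V \<and> E' \<subseteq> E \<and> (\<forall>e\<in>E'. e \<subseteq> W)"

end

(*
  The graph is bipartite. Its left side Y has at least N/2 vertices; its right side consists of
  l >= N^eps blocks, block j being split into 2^(j mod L) buckets, L = floor((1 - eps) log N - 2).
  Every left vertex chooses one bucket in each block and is joined to it, so the average degree
  is at least l >= N^eps.

  Call a bucket rich for S <= Y if at least g ~ 64 K^3 N^eps / L vertices of S chose it.
  A union bound shows that some choice has fewer than |S|/K rich buckets for every nonempty S: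
  blocks with fewer than 6|S|/g buckets contain at most |S|/(2K) buckets altogether, so
  ceil(|S|/(2K)) rich buckets lie in wider blocks, and each of them pins g choices to a bucket
  of probability at most g/(6|S|); as (|S| choose g) (g/(6|S|))^g <= 2^-g and N^(2K+2) < 2^g,
  the expected number of such configurations is below one.

  Now let H have all degrees in [d', K d'] with d' > g, and let S and X be its left and right
  vertex sets. Double counting the edges of H gives |S| <= K |X|, and every vertex of X has
  degree > g in H, hence is a rich bucket for S. So |S| <= K |X| <= K (number of rich buckets)
  < |S|, a contradiction; thus d' <= g <= 64 K^3 N^eps / L.
*)

theory Submission
  imports Defs "HOL-Library.FuncSet" "HOL-Real_Asymp.Real_Asymp"
begin

lemma power_le_exp_mult_fact:
  fixes x :: real
  assumes "0 \<le> x"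
  shows "x ^ n \<le> exp x * fact n"
proof -
  have "x ^ n /\<^sub>R fact n \<le> (\<Sum>k. x ^ k /\<^sub>R fact k)"
    using sum_le_suminf[OF summable_exp_generic, of "{n}" x] assms by simp
  then have "x ^ n / fact n \<le> exp x"
    by (simp add: exp_def divide_inverse mult.commute)
  then show ?thesis
    by (simp add: divide_le_eq mult.commute)
qed

lemma binomial_mult_power_le: "real (n choose k) * real k ^ k \<le> (3 * real n) ^ k"
proof -
  have "real k ^ k \<le> exp (real k) * fact k"
    by (rule power_le_exp_mult_fact) simp
  also have "exp (real k) = exp 1 ^ k"
    using exp_of_nat_mult[of k 1] by simp
  also have "exp 1 ^ k * fact k \<le> (3::real) ^ k * fact k"
    using exp_le by (intro mult_right_mono power_mono) auto
  finally have "real (n choose k) * real k ^ k \<le> real (n choose k) * (3 ^ k * fact k)"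
    by (intro mult_left_mono) auto
  also have "\<dots> = 3 ^ k * (real (n choose k) * fact k)"
    by simp
  also have "\<dots> \<le> 3 ^ k * real n ^ k"
  proof (intro mult_left_mono)
    show "real (n choose k) * fact k \<le> real n ^ k"
      using binomial_fact_pow[of n k] by (metis of_nat_fact of_nat_le_iff of_nat_mult of_nat_power)
  qed simp
  finally show ?thesis
    by (simp add: power_mult_distrib)
qed

lemma binomial_le_power: "n choose k \<le> n ^ k"
  by (cases "k \<le> n") (auto simp: binomial_le_pow binomial_eq_0)

lemma binomial_mult_ratio_power_le:
  assumes "0 < s"
  shows "real (s choose g) * (real g / (6 * real s)) ^ g \<le> (1 / 2) ^ g"
proof -
  have "real (s choose g) * (real g / (6 * real s)) ^ g = real (s choose g) * real g ^ g / (6 * real s) ^ g"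
    by (simp add: power_divide)
  also have "\<dots> \<le> (3 * real s) ^ g / (6 * real s) ^ g"
    by (intro divide_right_mono binomial_mult_power_le) simp
  also have "\<dots> = (3 * real s / (6 * real s)) ^ g"
    by (simp only: power_divide)
  also have "3 * real s / (6 * real s) = 1 / 2"
    using assms by simp
  finally show ?thesis .
qed

lemma union_bound_le:
  fixes N s r g K :: nat
  assumes "0 < s" "0 < r" "s \<le> 2 * K * r" "1 \<le> N" "real N ^ (2 * K + 1) \<le> 2 ^ g"
  shows "real N ^ s * real N ^ r * (real (s choose g) ^ r / (6 * real s / real g) ^ (g * r))
    \<le> real N ^ (2 * K + 1) / 2 ^ g"
proof -
  define q where "q = real N ^ (2 * K + 1) / 2 ^ g"
  have "real (s choose g) ^ r / (6 * real s / real g) ^ (g * r)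
      = (real (s choose g) * (real g / (6 * real s)) ^ g) ^ r"
    by (simp add: power_mult power_mult_distrib power_divide)
  also have "\<dots> \<le> ((1 / 2) ^ g) ^ r"
    using assms(1) by (intro power_mono binomial_mult_ratio_power_le) auto
  finally have binomial: "real (s choose g) ^ r / (6 * real s / real g) ^ (g * r) \<le> ((1 / 2) ^ g) ^ r" .
  have "real N ^ s \<le> real N ^ (2 * K * r)"
    using assms(3,4) by (intro power_increasing) auto
  then have "real N ^ s * real N ^ r * (real (s choose g) ^ r / (6 * real s / real g) ^ (g * r))
      \<le> real N ^ (2 * K * r) * real N ^ r * ((1 / 2) ^ g) ^ r"
    using binomial by (intro mult_mono) auto
  also have "\<dots> = q ^ r"
    by (simp add: q_def power_mult_distrib power_divide power_add power_mult[symmetric] algebra_simps)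
  also have "\<dots> \<le> q"
    using assms(2,5) by (intro power_decreasing[of 1 r q, simplified]) (auto simp: q_def)
  finally show ?thesis
    by (simp add: q_def)
qed

lemma sum_lessThan_mult_mod:
  fixes h :: "nat \<Rightarrow> nat"
  shows "(\<Sum>j<t * L. h (j mod L)) = t * (\<Sum>i<L. h i)"
proof (induction t)
  case (Suc t)
  have "(\<Sum>j\<in>{0 + t * L..<L + t * L}. h (j mod L)) = (\<Sum>i\<in>{0..<L}. h ((i + t * L) mod L))"
    by (rule sum.shift_bounds_nat_ivl)
  also have "\<dots> = (\<Sum>i<L. h i)"
    by (intro sum.cong) (auto simp: lessThan_atLeast0)
  finally have "(\<Sum>j\<in>{t * L..<Suc t * L}. h (j mod L)) = (\<Sum>i<L. h i)"
    by (simp add: add.commute)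
  moreover have "(\<Sum>j<Suc t * L. h (j mod L)) = (\<Sum>j<t * L. h (j mod L)) + (\<Sum>j\<in>{t * L..<Suc t * L}. h (j mod L))"
    unfolding lessThan_atLeast0 by (rule sum.atLeastLessThan_concat[symmetric]) auto
  ultimately show ?case
    using Suc by simp
qed simp

lemma sum_two_powers_below_le:
  fixes g c L :: nat
  shows "g * (\<Sum>i | i < L \<and> g * 2 ^ i < c. 2 ^ i) \<le> 2 * c"
proof (cases "{i. i < L \<and> g * 2 ^ i < c} = {}")
  case False
  define p where "p = Max {i. i < L \<and> g * 2 ^ i < c}"
  have p: "g * 2 ^ p < c"
    using Max_in[of "{i. i < L \<and> g * 2 ^ i < c}"] False unfolding p_def by auto
  have "(\<Sum>i | i < L \<and> g * 2 ^ i < c. 2 ^ i) \<le> (\<Sum>i<Suc p. 2 ^ i :: nat)"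
    by (intro sum_mono2) (auto simp: p_def less_Suc_eq_le)
  also have "\<dots> < 2 * 2 ^ p"
    by (induction p) auto
  finally have "g * (\<Sum>i | i < L \<and> g * 2 ^ i < c. 2 ^ i) \<le> 2 * (g * 2 ^ p)"
    by simp
  then show ?thesis
    using p by linarith
next
  case True
  show ?thesis
    unfolding True by simp
qed

lemma card_UN_le_card_mult:
  assumes "finite A" "\<And>a. a \<in> A \<Longrightarrow> real (card (F a)) \<le> c"
  shows "real (card (\<Union>a\<in>A. F a)) \<le> real (card A) * c"
proof -
  have "real (card (\<Union>a\<in>A. F a)) \<le> (\<Sum>a\<in>A. real (card (F a)))"
    using card_UN_le[OF assms(1), of F] by (simp flip: of_nat_sum)
  also have "\<dots> \<le> real (card A) * c"
    using sum_bounded_above[of A "\<lambda>a. real (card (F a))" c] assms(2) by simp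
  finally show ?thesis .
qed

lemma card_PiE_fixed_mult_le:
  assumes "finite I" "\<And>i. i \<in> I \<Longrightarrow> finite (A i)" "P \<subseteq> I"
  shows "card {f \<in> PiE I A. \<forall>i\<in>P. f i = c i} * (\<Prod>i\<in>P. card (A i)) \<le> card (PiE I A)"
proof -
  have "{f \<in> PiE I A. \<forall>i\<in>P. f i = c i} \<subseteq> PiE I (\<lambda>i. if i \<in> P then {c i} else A i)"
    by (auto simp: PiE_iff extensional_def)
  then have "card {f \<in> PiE I A. \<forall>i\<in>P. f i = c i} \<le> card (PiE I (\<lambda>i. if i \<in> P then {c i} else A i))"
    using assms(1,2) by (intro card_mono finite_PiE) auto
  also have "\<dots> = (\<Prod>i\<in>I. card (if i \<in> P then {c i} else A i))"
    using assms(1) by (rule card_PiE)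
  also have "\<dots> = (\<Prod>i\<in>I - P. card (A i))"
    using assms by (simp add: prod.subset_diff[of P I])
  finally show ?thesis
    using assms by (simp add: card_PiE prod.subset_diff[of P I])
qed

lemma div_round_up_le_iff:
  fixes s k c :: nat
  assumes "0 < k"
  shows "(s + k - 1) div k \<le> c \<longleftrightarrow> s \<le> k * c"
proof -
  have "(s + k - 1) div k \<le> c \<longleftrightarrow> s + k - 1 < Suc c * k"
    using assms by (simp add: less_Suc_eq_le[symmetric] div_less_iff_less_mult)
  then show ?thesis
    using assms by (auto simp: algebra_simps)
qed

section \<open>Bucket maps with few rich buckets\<close>

text \<open>Block \<open>j < l\<close> consists of \<open>m j\<close> buckets, and a bucket map chooses for every block \<open>j\<close>
  and every left vertex \<open>y < n\<close> one bucket \<open>f (j, y)\<close> of that block.\<close>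

definition bucket_maps :: "nat \<Rightarrow> nat \<Rightarrow> (nat \<Rightarrow> nat) \<Rightarrow> (nat \<times> nat \<Rightarrow> nat) set" where
  "bucket_maps l n m = PiE ({..<l} \<times> {..<n}) (\<lambda>(j, y). {..<m j})"

definition buckets :: "nat \<Rightarrow> (nat \<Rightarrow> nat) \<Rightarrow> (nat \<times> nat) set" where
  "buckets l m = (SIGMA j:{..<l}. {..<m j})"

definition rich_buckets ::
    "nat \<Rightarrow> (nat \<Rightarrow> nat) \<Rightarrow> (nat \<times> nat \<Rightarrow> nat) \<Rightarrow> nat \<Rightarrow> nat set \<Rightarrow> (nat \<times> nat) set" where
  "rich_buckets l m f g S = {(j, b) \<in> buckets l m. g \<le> card {y \<in> S. f (j, y) = b}}"

definition pinned_maps :: "nat \<Rightarrow> nat \<Rightarrow> (nat \<Rightarrow> nat) \<Rightarrow> (nat \<times> nat) set \<Rightarrow>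
    (nat \<times> nat \<Rightarrow> nat set) \<Rightarrow> (nat \<times> nat \<Rightarrow> nat) set" where
  "pinned_maps l n m R T = {f \<in> bucket_maps l n m. \<forall>(j, b)\<in>R. \<forall>y\<in>T (j, b). f (j, y) = b}"

lemma finite_buckets [simp]: "finite (buckets l m)"
  by (simp add: buckets_def)

lemma finite_bucket_maps [simp]: "finite (bucket_maps l n m)"
  by (auto simp: bucket_maps_def intro!: finite_PiE)

lemma pinned_mapsD:
  assumes "f \<in> pinned_maps l n m R T" "jb \<in> R" "y \<in> T jb"
  shows "f (fst jb, y) = snd jb"
  using assms unfolding pinned_maps_def by (cases jb) auto

lemma card_pinned_maps_le:
  assumes R: "R \<subseteq> buckets l m"
    and T: "\<And>jb. jb \<in> R \<Longrightarrow> T jb \<subseteq> {..<n} \<and> card (T jb) = g"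
    and M: "0 \<le> M" "\<And>j b. (j, b) \<in> R \<Longrightarrow> M \<le> real (m j)"
  shows "real (card (pinned_maps l n m R T)) * M ^ (g * card R) \<le> real (card (bucket_maps l n m))"
proof (cases "pinned_maps l n m R T = {}")
  case False
  then obtain f0 where f0: "f0 \<in> pinned_maps l n m R T"
    by blast
  define P where "P = (\<Union>jb\<in>R. {fst jb} \<times> T jb)"
  have P_sub: "P \<subseteq> {..<l} \<times> {..<n}"
    using R T by (fastforce simp: P_def buckets_def)
  have finite_R: "finite R"
    by (rule finite_subset[OF R]) simp
  have "card P = (\<Sum>jb\<in>R. card ({fst jb} \<times> T jb))"
    unfolding P_def
  proof (rule card_UN_disjoint[OF finite_R])
    show "\<forall>jb\<in>R. finite ({fst jb} \<times> T jb)"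
      using T finite_subset by fastforce
    show "\<forall>jb\<in>R. \<forall>jb'\<in>R. jb \<noteq> jb' \<longrightarrow> {fst jb} \<times> T jb \<inter> {fst jb'} \<times> T jb' = {}"
    proof (intro ballI impI)
      fix jb jb' assume "jb \<in> R" "jb' \<in> R" "jb \<noteq> jb'"
      then show "{fst jb} \<times> T jb \<inter> {fst jb'} \<times> T jb' = {}"
        using pinned_mapsD[OF f0, of jb] pinned_mapsD[OF f0, of jb'] by (auto simp: prod_eq_iff) metis
    qed
  qed
  also have "\<dots> = g * card R"
    using T by (simp add: card_cartesian_product)
  finally have card_P: "card P = g * card R" .
  have "pinned_maps l n m R T \<subseteq> {f \<in> bucket_maps l n m. \<forall>i\<in>P. f i = f0 i}"
  proof (intro subsetI CollectI conjI ballI)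
    fix f assume "f \<in> pinned_maps l n m R T"
    then show "f \<in> bucket_maps l n m"
      by (simp add: pinned_maps_def)
  next
    fix f i assume f: "f \<in> pinned_maps l n m R T" and "i \<in> P"
    then obtain jb y where "jb \<in> R" "y \<in> T jb" "i = (fst jb, y)"
      by (auto simp: P_def)
    then show "f i = f0 i"
      using pinned_mapsD[OF f] pinned_mapsD[OF f0] by simp
  qed
  then have "card (pinned_maps l n m R T) \<le> card {f \<in> bucket_maps l n m. \<forall>i\<in>P. f i = f0 i}"
    by (intro card_mono) auto
  then have "card (pinned_maps l n m R T) * (\<Prod>i\<in>P. m (fst i))
      \<le> card {f \<in> bucket_maps l n m. \<forall>i\<in>P. f i = f0 i} * (\<Prod>i\<in>P. m (fst i))"
    by (rule mult_le_mono1)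
  also have "\<dots> \<le> card (bucket_maps l n m)"
    using card_PiE_fixed_mult_le[OF _ _ P_sub, of "\<lambda>(j, y). {..<m j}" f0]
    by (simp add: bucket_maps_def case_prod_beta)
  finally have card_le: "card (pinned_maps l n m R T) * (\<Prod>i\<in>P. m (fst i)) \<le> card (bucket_maps l n m)" .
  have "M ^ (g * card R) = (\<Prod>i\<in>P. M)"
    using card_P by simp
  also have "\<dots> \<le> (\<Prod>i\<in>P. real (m (fst i)))"
    by (rule prod_mono) (use M in \<open>auto simp: P_def\<close>)
  finally have "real (card (pinned_maps l n m R T)) * M ^ (g * card R)
      \<le> real (card (pinned_maps l n m R T)) * (\<Prod>i\<in>P. real (m (fst i)))"
    by (rule mult_left_mono) simp
  also have "\<dots> \<le> real (card (bucket_maps l n m))"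
    using card_le by (metis of_nat_le_iff of_nat_mult of_nat_prod)
  finally show ?thesis .
qed simp

lemma pinned_witness:
  assumes f: "f \<in> bucket_maps l n m" and r: "r \<le> card (rich_buckets l m f g S \<inter> F)"
  shows "\<exists>R T. R \<subseteq> F \<inter> buckets l m \<and> card R = r \<and> T \<in> PiE R (\<lambda>_. {T. T \<subseteq> S \<and> card T = g})
    \<and> f \<in> pinned_maps l n m R T"
proof -
  obtain R where R: "R \<subseteq> rich_buckets l m f g S \<inter> F" "card R = r"
    using obtain_subset_with_card_n[OF r] by metis
  have "\<exists>T. T \<subseteq> {y \<in> S. f (fst jb, y) = snd jb} \<and> card T = g" if "jb \<in> R" for jb
    using R(1) that obtain_subset_with_card_n[of g "{y \<in> S. f (fst jb, y) = snd jb}"]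
    by (cases jb) (auto simp: rich_buckets_def)
  then obtain T where T: "\<And>jb. jb \<in> R \<Longrightarrow> T jb \<subseteq> {y \<in> S. f (fst jb, y) = snd jb}"
    and card_T: "\<And>jb. jb \<in> R \<Longrightarrow> card (T jb) = g"
    by metis
  have "restrict T R \<in> PiE R (\<lambda>_. {T. T \<subseteq> S \<and> card T = g})"
    using T card_T by force
  moreover have "f \<in> pinned_maps l n m R (restrict T R)"
    using f T by (fastforce simp: pinned_maps_def)
  moreover have "R \<subseteq> F \<inter> buckets l m"
    using R(1) by (auto simp: rich_buckets_def)
  ultimately show ?thesis
    using R(2) by blast
qed

lemma card_rich_wide_buckets:
  assumes rich: "card S \<le> K * card (rich_buckets l m f g S)"
    and narrow: "2 * K * (\<Sum>j | j < l \<and> g * m j < c. m j) \<le> card S"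
  shows "card S \<le> 2 * K * card (rich_buckets l m f g S \<inter> {(j, b). c \<le> g * m j})"
proof -
  let ?W = "rich_buckets l m f g S \<inter> {(j, b). c \<le> g * m j}"
  let ?N = "SIGMA j:{j. j < l \<and> g * m j < c}. {..<m j}"
  have "rich_buckets l m f g S \<subseteq> ?W \<union> ?N"
    by (force simp: rich_buckets_def buckets_def)
  then have "card (rich_buckets l m f g S) \<le> card (?W \<union> ?N)"
    by (rule card_mono[rotated]) (auto simp: rich_buckets_def intro: finite_subset[OF _ finite_buckets])
  also have "\<dots> \<le> card ?W + card ?N"
    by (rule card_Un_le)
  also have "card ?N = (\<Sum>j | j < l \<and> g * m j < c. m j)"
    by simp
  finally have "K * card (rich_buckets l m f g S) \<le> K * (card ?W + (\<Sum>j | j < l \<and> g * m j < c. m j))"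
    by (rule mult_le_mono2)
  then show ?thesis
    using rich narrow unfolding add_mult_distrib2 mult.assoc by linarith
qed

definition pinned_union ::
    "nat \<Rightarrow> nat \<Rightarrow> (nat \<Rightarrow> nat) \<Rightarrow> (nat \<times> nat) set \<Rightarrow> nat \<Rightarrow> nat \<Rightarrow> nat \<Rightarrow> (nat \<times> nat \<Rightarrow> nat) set" where
  "pinned_union l n m W s r g = (\<Union>S\<in>{S. S \<subseteq> {..<n} \<and> card S = s}. \<Union>R\<in>{R. R \<subseteq> W \<and> card R = r}.
     \<Union>T\<in>PiE R (\<lambda>_. {T. T \<subseteq> S \<and> card T = g}). pinned_maps l n m R T)"

definition bad_maps :: "nat \<Rightarrow> nat \<Rightarrow> (nat \<Rightarrow> nat) \<Rightarrow> nat \<Rightarrow> nat \<Rightarrow> nat \<Rightarrow> (nat \<times> nat \<Rightarrow> nat) set" where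
  "bad_maps l n m K g s =
     {f \<in> bucket_maps l n m. \<exists>S\<subseteq>{..<n}. card S = s \<and> s \<le> K * card (rich_buckets l m f g S)}"

lemma card_pinned_union_le:
  fixes M :: real
  assumes W: "W \<subseteq> buckets l m" "card W \<le> N" and n: "n \<le> N"
    and M: "0 < M" "\<And>j b. (j, b) \<in> W \<Longrightarrow> M \<le> real (m j)"
  shows "real (card (pinned_union l n m W s r g))
    \<le> real N ^ s * real N ^ r * (real (s choose g) ^ r / M ^ (g * r)) * real (card (bucket_maps l n m))"
proof -
  let ?TT = "\<lambda>R S. PiE R (\<lambda>_. {T. T \<subseteq> S \<and> card T = g})"
  define bound where "bound = real (card (bucket_maps l n m)) / M ^ (g * r)"
  have "finite W"
    using W(1) by (rule finite_subset) simp
  have pinned: "real (card (pinned_maps l n m R T)) \<le> bound"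
    if R: "R \<subseteq> W" "card R = r" and T: "T \<in> ?TT R S" and S: "S \<subseteq> {..<n}" for S R T
  proof -
    have "real (card (pinned_maps l n m R T)) * M ^ (g * card R) \<le> real (card (bucket_maps l n m))"
    proof (rule card_pinned_maps_le)
      show "T jb \<subseteq> {..<n} \<and> card (T jb) = g" if "jb \<in> R" for jb
        using PiE_mem[OF T that] S by blast
    qed (use R W M in auto)
    then show ?thesis
      using M(1) R(2) by (simp add: bound_def pos_le_divide_eq)
  qed
  have per_set: "real (card (\<Union>R\<in>{R. R \<subseteq> W \<and> card R = r}. \<Union>T\<in>?TT R S. pinned_maps l n m R T))
      \<le> real N ^ r * (real (s choose g) ^ r * bound)"
    if S: "S \<subseteq> {..<n}" "card S = s" for S
  proof -
    have "finite S"
      using S(1) by (rule finite_subset) simp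
    have "real (card (\<Union>T\<in>?TT R S. pinned_maps l n m R T)) \<le> real (s choose g) ^ r * bound"
      if R: "R \<subseteq> W" "card R = r" for R
    proof -
      have "finite R"
        using R(1) \<open>finite W\<close> by (rule finite_subset)
      then have "real (card (\<Union>T\<in>?TT R S. pinned_maps l n m R T)) \<le> real (card (?TT R S)) * bound"
        using \<open>finite S\<close> by (intro card_UN_le_card_mult pinned[OF R _ S(1)] finite_PiE) auto
      also have "card (?TT R S) = (s choose g) ^ r"
        using \<open>finite R\<close> \<open>finite S\<close> R(2) S(2) by (simp add: card_PiE n_subsets)
      finally show ?thesis
        by simp
    qed
    then have "real (card (\<Union>R\<in>{R. R \<subseteq> W \<and> card R = r}. \<Union>T\<in>?TT R S. pinned_maps l n m R T))
        \<le> real (card {R. R \<subseteq> W \<and> card R = r}) * (real (s choose g) ^ r * bound)"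
      using \<open>finite W\<close> by (intro card_UN_le_card_mult) auto
    also have "\<dots> \<le> real N ^ r * (real (s choose g) ^ r * bound)"
    proof (rule mult_right_mono)
      have "card {R. R \<subseteq> W \<and> card R = r} \<le> N ^ r"
        using binomial_le_power[of "card W" r] power_mono[OF W(2), of r] \<open>finite W\<close> by (simp add: n_subsets)
      then show "real (card {R. R \<subseteq> W \<and> card R = r}) \<le> real N ^ r"
        by (simp flip: of_nat_power)
    qed (use M(1) in \<open>simp add: bound_def\<close>)
    finally show ?thesis .
  qed
  have "real (card (pinned_union l n m W s r g))
      \<le> real (card {S. S \<subseteq> {..<n} \<and> card S = s}) * (real N ^ r * (real (s choose g) ^ r * bound))"
    unfolding pinned_union_def by (intro card_UN_le_card_mult per_set) auto
  also have "\<dots> \<le> real N ^ s * (real N ^ r * (real (s choose g) ^ r * bound))"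
  proof (rule mult_right_mono)
    have "card {S. S \<subseteq> {..<n} \<and> card S = s} \<le> N ^ s"
      using binomial_le_power[of n s] power_mono[OF n, of s] by (simp add: n_subsets)
    then show "real (card {S. S \<subseteq> {..<n} \<and> card S = s}) \<le> real N ^ s"
      by (simp flip: of_nat_power)
  qed (use M(1) in \<open>simp add: bound_def\<close>)
  finally show ?thesis
    by (simp add: bound_def mult_ac)
qed

lemma bad_maps_subset_pinned_union:
  assumes K: "0 < K" and narrow: "2 * K * (\<Sum>j | j < l \<and> g * m j < 6 * s. m j) \<le> s"
  shows "bad_maps l n m K g s
    \<subseteq> pinned_union l n m ({(j, b). 6 * s \<le> g * m j} \<inter> buckets l m) s ((s + 2 * K - 1) div (2 * K)) g"
proof
  fix f assume "f \<in> bad_maps l n m K g s"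
  then obtain S where f: "f \<in> bucket_maps l n m" and S: "S \<subseteq> {..<n}" "s = card S"
    and rich: "card S \<le> K * card (rich_buckets l m f g S)"
    by (auto simp: bad_maps_def)
  have "s \<le> 2 * K * card (rich_buckets l m f g S \<inter> {(j, b). 6 * s \<le> g * m j})"
    using card_rich_wide_buckets[OF rich, of "6 * s"] narrow S(2) by simp
  then have "(s + 2 * K - 1) div (2 * K) \<le> card (rich_buckets l m f g S \<inter> {(j, b). 6 * s \<le> g * m j})"
    using div_round_up_le_iff[of "2 * K" s] K by simp
  from pinned_witness[OF f this] S show "f \<in> pinned_union l n m ({(j, b). 6 * s \<le> g * m j} \<inter> buckets l m) s
      ((s + 2 * K - 1) div (2 * K)) g"
    unfolding pinned_union_def by blast
qed

lemma card_bad_maps_le: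
  fixes K g N l n s :: nat
  assumes K: "1 \<le> K" and g: "1 \<le> g" and s: "1 \<le> s" "s \<le> n"
    and N: "n \<le> N" "card (buckets l m) \<le> N" "real N ^ (2 * K + 2) < 2 ^ g"
    and narrow: "2 * K * (\<Sum>j | j < l \<and> g * m j < 6 * s. m j) \<le> s"
  shows "real (card (bad_maps l n m K g s)) \<le> real N ^ (2 * K + 1) / 2 ^ g * real (card (bucket_maps l n m))"
proof -
  define W where "W = {(j, b). 6 * s \<le> g * m j} \<inter> buckets l m"
  define r where "r = (s + 2 * K - 1) div (2 * K)"
  have r: "0 < r" "s \<le> 2 * K * r"
    using div_round_up_le_iff[of "2 * K" s 0] div_round_up_le_iff[of "2 * K" s r] K s by (auto simp: r_def)
  have "real (card (bad_maps l n m K g s)) \<le> real (card (pinned_union l n m W s r g))"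
    using bad_maps_subset_pinned_union[OF _ narrow] K unfolding W_def r_def
    by (intro of_nat_mono card_mono finite_subset[OF _ finite_bucket_maps])
      (auto simp: pinned_union_def pinned_maps_def)
  also have "\<dots> \<le> real N ^ s * real N ^ r * (real (s choose g) ^ r / (6 * real s / real g) ^ (g * r))
      * real (card (bucket_maps l n m))"
  proof (rule card_pinned_union_le)
    show "W \<subseteq> buckets l m" "card W \<le> N"
      using N(2) card_mono[of "buckets l m" W] by (auto simp: W_def)
    show "6 * real s / real g \<le> real (m j)" if "(j, b) \<in> W" for j b
      using that g by (simp add: W_def divide_le_eq mult.commute flip: of_nat_mult of_nat_le_iff)
  qed (use N(1) g s in simp_all)
  also have "\<dots> \<le> real N ^ (2 * K + 1) / 2 ^ g * real (card (bucket_maps l n m))"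
  proof -
    have "real N ^ (2 * K + 1) \<le> real N ^ (2 * K + 2)"
      using s N by (intro power_increasing) auto
    then have "real N ^ (2 * K + 1) \<le> 2 ^ g"
      using N(3) by linarith
    then have "real N ^ s * real N ^ r * (real (s choose g) ^ r / (6 * real s / real g) ^ (g * r))
        \<le> real N ^ (2 * K + 1) / 2 ^ g"
      using s r N by (intro union_bound_le) auto
    then show ?thesis
      by (rule mult_right_mono) simp
  qed
  finally show ?thesis .
qed

lemma exists_good_bucket_map:
  fixes K g N l n :: nat
  assumes m_pos: "\<And>j. 0 < m j" and K: "1 \<le> K" and g: "1 \<le> g"
    and N: "n \<le> N" "card (buckets l m) \<le> N" "real N ^ (2 * K + 2) < 2 ^ g"
    and narrow: "\<And>s. 1 \<le> s \<Longrightarrow> 2 * K * (\<Sum>j | j < l \<and> g * m j < 6 * s. m j) \<le> s"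
  shows "\<exists>f\<in>bucket_maps l n m. \<forall>S\<subseteq>{..<n}. S \<noteq> {} \<longrightarrow> K * card (rich_buckets l m f g S) < card S"
proof (rule ccontr)
  assume no_good: "\<not> ?thesis"
  have "bucket_maps l n m \<subseteq> (\<Union>s\<in>{1..n}. bad_maps l n m K g s)"
  proof
    fix f assume f: "f \<in> bucket_maps l n m"
    with no_good obtain S where S: "S \<subseteq> {..<n}" "S \<noteq> {}" "card S \<le> K * card (rich_buckets l m f g S)"
      by (auto simp: not_less)
    moreover from S(1) have "finite S"
      by (rule finite_subset) simp
    ultimately have "card S \<in> {1..n}"
      using card_mono[of "{..<n}" S] by (simp add: Suc_le_eq card_gt_0_iff)
    with f S show "f \<in> (\<Union>s\<in>{1..n}. bad_maps l n m K g s)"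
      unfolding bad_maps_def by blast
  qed
  then have "real (card (bucket_maps l n m)) \<le> real (card (\<Union>s\<in>{1..n}. bad_maps l n m K g s))"
    by (intro of_nat_mono card_mono) (auto simp: bad_maps_def)
  also have "\<dots> \<le> real (card {1..n}) * (real N ^ (2 * K + 1) / 2 ^ g * real (card (bucket_maps l n m)))"
    using K g N narrow by (intro card_UN_le_card_mult card_bad_maps_le) auto
  also have "\<dots> \<le> real N * (real N ^ (2 * K + 1) / 2 ^ g * real (card (bucket_maps l n m)))"
    using N(1) by (intro mult_right_mono) auto
  also have "\<dots> = real N ^ (2 * K + 2) / 2 ^ g * real (card (bucket_maps l n m))"
    by simp
  also have "\<dots> < real (card (bucket_maps l n m))"
    using N(3) m_pos by (simp add: divide_less_eq bucket_maps_def card_PiE prod_pos case_prod_beta)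
  finally show False
    by simp
qed

section \<open>The bucket graph\<close>

lemma sum_degree_eq_card_edges:
  assumes "finite E" "finite A" "\<And>e. e \<in> E \<Longrightarrow> card (e \<inter> A) = 1"
  shows "(\<Sum>v\<in>A. degree E v) = card E"
proof -
  have "(\<Sum>v\<in>A. degree E v) = (\<Sum>v\<in>A. \<Sum>e\<in>E. if v \<in> e then 1 else 0)"
    using assms(1) by (intro sum.cong refl) (simp add: degree_def sum.If_cases Int_def)
  also have "\<dots> = (\<Sum>e\<in>E. \<Sum>v\<in>A. if v \<in> e then 1 else 0)"
    by (rule sum.swap)
  also have "\<dots> = (\<Sum>e\<in>E. card (e \<inter> A))"
    using assms(2) by (intro sum.cong refl) (simp add: sum.If_cases Int_commute)
  finally show ?thesis
    using assms(3) by simp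
qed

lemma card_le_if_degrees_bounded:
  fixes d K :: real
  assumes "finite E" "finite A" "finite B"
    and "\<And>e. e \<in> E \<Longrightarrow> card (e \<inter> A) = 1" "\<And>e. e \<in> E \<Longrightarrow> card (e \<inter> B) = 1"
    and "\<And>v. v \<in> A \<Longrightarrow> d \<le> real (degree E v)" "\<And>v. v \<in> B \<Longrightarrow> real (degree E v) \<le> K * d"
    and "0 < d"
  shows "real (card A) \<le> K * real (card B)"
proof -
  have "d * real (card A) \<le> (\<Sum>v\<in>A. real (degree E v))"
    using sum_mono[of A "\<lambda>_. d"] assms(6) by (simp add: mult.commute)
  also have "\<dots> = real (card E)"
    using sum_degree_eq_card_edges[OF assms(1,2,4)] by (simp flip: of_nat_sum)
  also have "\<dots> = (\<Sum>v\<in>B. real (degree E v))"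
    using sum_degree_eq_card_edges[OF assms(1,3,5)] by (simp flip: of_nat_sum)
  also have "\<dots> \<le> d * (K * real (card B))"
    using sum_mono[of B _ "\<lambda>_. K * d"] assms(7) by (simp add: mult_ac)
  finally show ?thesis
    using assms(8) by simp
qed

text \<open>The left vertices are \<open>0, \<dots>, n - 1\<close>; bucket \<open>b\<close> of block \<open>j\<close> is the vertex \<open>n + j * w + b\<close>,
  where the width \<open>w\<close> bounds the number of buckets of every block.\<close>

definition bucket_graph :: "nat \<Rightarrow> nat \<Rightarrow> nat \<Rightarrow> (nat \<times> nat \<Rightarrow> nat) \<Rightarrow> nat set set" where
  "bucket_graph n w l f = (\<lambda>(j, y). {y, n + j * w + f (j, y)}) ` ({..<l} \<times> {..<n})"

lemma bucket_graph_edgeE: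
  assumes "e \<in> bucket_graph n w l f"
  obtains j y where "j < l" "y < n" "e = {y, n + j * w + f (j, y)}"
  using assms unfolding bucket_graph_def by auto

lemma bucket_maps_less:
  assumes "f \<in> bucket_maps l n m" "j < l" "y < n"
  shows "f (j, y) < m j"
  using assms by (auto simp: bucket_maps_def PiE_iff)

lemma bucket_vertex_div_mod:
  fixes n w j b :: nat
  assumes "b < w"
  shows "(n + j * w + b - n) div w = j" "(n + j * w + b - n) mod w = b"
  using assms by auto

lemma bucket_graph_simple:
  assumes f: "f \<in> bucket_maps l n m" and w: "\<And>j. m j \<le> w" and N: "n + l * w \<le> N"
  shows "simple_graph {..<N} (bucket_graph n w l f)"
proof -
  have "e \<subseteq> {..<N} \<and> card e = 2" if e: "e \<in> bucket_graph n w l f" for e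
  proof -
    obtain j y where jy: "j < l" "y < n" "e = {y, n + j * w + f (j, y)}"
      using e by (rule bucket_graph_edgeE)
    have "j * w + f (j, y) < Suc j * w"
      using bucket_maps_less[OF f jy(1,2)] w[of j] by simp
    also have "\<dots> \<le> l * w"
      using jy(1) by (intro mult_right_mono) auto
    finally show ?thesis
      using jy N by auto
  qed
  then show ?thesis
    by (simp add: simple_graph_def)
qed

lemma card_bucket_graph:
  assumes f: "f \<in> bucket_maps l n m" and w: "\<And>j. m j \<le> w"
  shows "card (bucket_graph n w l f) = l * n"
proof -
  have "inj_on (\<lambda>(j, y). {y, n + j * w + f (j, y)}) ({..<l} \<times> {..<n})"
  proof (rule inj_onI, clarsimp)
    fix j y j' y'
    assume jy: "j < l" "y < n" "j' < l" "y' < n"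
      and "{y, n + j * w + f (j, y)} = {y', n + j' * w + f (j', y')}"
    then have "y = y'" and same: "n + j * w + f (j, y) = n + j' * w + f (j', y')"
      by (auto simp: doubleton_eq_iff)
    have "f (j, y) < w" "f (j', y') < w"
      using bucket_maps_less[OF f] jy w by (meson order.strict_trans2)+
    then have "j = j'"
      using bucket_vertex_div_mod(1)[of "f (j, y)" w n j] bucket_vertex_div_mod(1)[of "f (j', y')" w n j']
      unfolding same by argo
    with \<open>y = y'\<close> show "j = j' \<and> y = y'"
      by simp
  qed
  then show ?thesis
    by (simp add: bucket_graph_def card_image)
qed

lemma degree_bucket_vertex_le:
  assumes f: "f \<in> bucket_maps l n m" and w: "\<And>j. m j \<le> w" and E': "E' \<subseteq> bucket_graph n w l f"
    and S: "\<And>e. e \<in> E' \<Longrightarrow> e \<inter> {..<n} \<subseteq> S" "finite S" and b: "b < w"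
  shows "degree E' (n + j * w + b) \<le> card {y \<in> S. f (j, y) = b}"
proof -
  let ?x = "n + j * w + b"
  have "{e \<in> E'. ?x \<in> e} \<subseteq> (\<lambda>y. {y, ?x}) ` {y \<in> S. f (j, y) = b}"
  proof
    fix e assume e: "e \<in> {e \<in> E'. ?x \<in> e}"
    then obtain j' y where jy: "j' < l" "y < n" "e = {y, n + j' * w + f (j', y)}"
      using E' by (blast elim: bucket_graph_edgeE)
    have x: "?x = n + j' * w + f (j', y)"
      using e jy by auto
    have "f (j', y) < w"
      using bucket_maps_less[OF f jy(1,2)] w by (meson order.strict_trans2)
    then have "j' = j" "f (j', y) = b"
      using bucket_vertex_div_mod[OF b, of n j] bucket_vertex_div_mod[of "f (j', y)" w n j'] unfolding x
      by simp_all
    moreover have "y \<in> S"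
      using S(1)[of e] e jy by auto
    moreover have "e = {y, ?x}"
      unfolding x by (fact jy(3))
    ultimately show "e \<in> (\<lambda>y. {y, ?x}) ` {y \<in> S. f (j, y) = b}"
      by auto
  qed
  then have "degree E' ?x \<le> card ((\<lambda>y. {y, ?x}) ` {y \<in> S. f (j, y) = b})"
    unfolding degree_def by (intro card_mono) (auto simp: S(2))
  also have "\<dots> \<le> card {y \<in> S. f (j, y) = b}"
    by (rule card_image_le) (simp add: S(2))
  finally show ?thesis .
qed

lemma card_le_card_rich_buckets:
  assumes f: "f \<in> bucket_maps l n m" and w: "\<And>j. m j \<le> w" and E': "E' \<subseteq> bucket_graph n w l f"
    and S: "\<And>e. e \<in> E' \<Longrightarrow> e \<inter> {..<n} \<subseteq> S" "finite S"
    and X: "\<And>x. x \<in> X \<Longrightarrow> n \<le> x \<and> g < degree E' x"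
  shows "card X \<le> card (rich_buckets l m f g S)"
proof -
  define decode where "decode x = ((x - n) div w, (x - n) mod w)" for x
  have "inj_on decode X"
  proof (rule inj_onI)
    fix x x' assume "x \<in> X" "x' \<in> X" "decode x = decode x'"
    then have "n \<le> x" "n \<le> x'" "(x - n) div w = (x' - n) div w" "(x - n) mod w = (x' - n) mod w"
      using X by (auto simp: decode_def)
    then show "x = x'"
      by (metis div_mult_mod_eq le_add_diff_inverse)
  qed
  moreover have "decode x \<in> rich_buckets l m f g S" if x: "x \<in> X" for x
  proof -
    have "{e \<in> E'. x \<in> e} \<noteq> {}"
      using X[OF x] by (metis card.empty degree_def not_less0)
    then obtain e j y where "e \<in> E'" "x \<in> e" "j < l" "y < n" "e = {y, n + j * w + f (j, y)}"
      using E' by (blast elim: bucket_graph_edgeE)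
    then have x_eq: "x = n + j * w + f (j, y)" and b: "f (j, y) < m j"
      using X[OF x] bucket_maps_less[OF f] by auto
    have "g < card {y' \<in> S. f (j, y') = f (j, y)}"
      using X[OF x] degree_bucket_vertex_le[OF f w E' S, of "f (j, y)" j] b w[of j] unfolding x_eq
      by linarith
    moreover have "decode x = (j, f (j, y))"
      using bucket_vertex_div_mod[of "f (j, y)" w n j] b w[of j] unfolding decode_def x_eq by simp
    ultimately show ?thesis
      using \<open>j < l\<close> b by (simp add: rich_buckets_def buckets_def)
  qed
  moreover have "finite (rich_buckets l m f g S)"
    by (rule finite_subset[OF _ finite_buckets]) (auto simp: rich_buckets_def)
  ultimately show ?thesis
    by (intro card_inj_on_le[of decode]) auto
qed

lemma bucket_graph_degree_bound:
  fixes d' :: real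
  assumes f: "f \<in> bucket_maps l n m" and w: "\<And>j. m j \<le> w"
    and good: "\<forall>S\<subseteq>{..<n}. S \<noteq> {} \<longrightarrow> K * card (rich_buckets l m f g S) < card S"
    and H: "subgraph W E' V (bucket_graph n w l f)" "finite V" "W \<noteq> {}"
    and deg: "\<forall>v\<in>W. d' \<le> real (degree E' v) \<and> real (degree E' v) \<le> real K * d'"
  shows "d' \<le> real g"
proof (rule ccontr)
  assume "\<not> d' \<le> real g"
  then have g_less: "g < degree E' v" if "v \<in> W" for v
    using deg that by force
  have "0 < d'"
    using \<open>\<not> d' \<le> real g\<close> by simp
  define S where "S = W \<inter> {..<n}"
  define X where "X = W - {..<n}"
  have E': "E' \<subseteq> bucket_graph n w l f" "\<And>e. e \<in> E' \<Longrightarrow> e \<subseteq> W" and "finite W"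
    using H(1,2) finite_subset by (auto simp: subgraph_def)
  have "finite E'"
    using E'(1) by (rule finite_subset) (simp add: bucket_graph_def)
  have ends: "card (e \<inter> S) = 1 \<and> card (e \<inter> X) = 1" if e: "e \<in> E'" for e
  proof -
    obtain j y where "y < n" "e = {y, n + j * w + f (j, y)}"
      using e E'(1) by (blast elim: bucket_graph_edgeE)
    moreover have "e \<subseteq> W"
      using E'(2) e by blast
    ultimately have "e \<inter> S = {y}" "e \<inter> X = {n + j * w + f (j, y)}"
      by (auto simp: S_def X_def)
    then show ?thesis
      by simp
  qed
  have "real (card S) \<le> real K * real (card X)"
    using \<open>finite E'\<close> \<open>finite W\<close> ends deg \<open>0 < d'\<close>
    by (intro card_le_if_degrees_bounded[of E']) (auto simp: S_def X_def)
  then have "card S \<le> K * card X"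
    by (simp only: of_nat_mult[symmetric] of_nat_le_iff)
  moreover have "card X \<le> card (rich_buckets l m f g S)"
    using E' \<open>finite W\<close> g_less
    by (intro card_le_card_rich_buckets[OF f w]) (auto simp: S_def X_def)
  moreover have "S \<noteq> {}"
  proof -
    obtain v where "v \<in> W"
      using H(3) by blast
    then have "{e \<in> E'. v \<in> e} \<noteq> {}"
      using g_less by (metis card.empty degree_def not_less0)
    then show ?thesis
      using ends by force
  qed
  then have "K * card (rich_buckets l m f g S) < card S"
    using good by (simp add: S_def)
  ultimately show False
    using mult_le_mono2[of "card X" "card (rich_buckets l m f g S)" K] by linarith
qed

lemma narrow_blocks_sum_le:
  fixes K t L g s :: nat
  assumes g: "1 \<le> g" "24 * K * t \<le> g"
  shows "2 * K * (\<Sum>j | j < t * L \<and> g * 2 ^ (j mod L) < 6 * s. 2 ^ (j mod L)) \<le> s"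
proof -
  let ?h = "\<lambda>i. if g * 2 ^ i < 6 * s then 2 ^ i else 0 :: nat"
  have "(\<Sum>j | j < t * L \<and> g * 2 ^ (j mod L) < 6 * s. 2 ^ (j mod L)) = (\<Sum>j<t * L. ?h (j mod L))"
    by (simp add: sum.If_cases lessThan_def Collect_conj_eq Int_commute)
  also have "\<dots> = t * (\<Sum>i<L. ?h i)"
    by (rule sum_lessThan_mult_mod)
  also have "(\<Sum>i<L. ?h i) = (\<Sum>i | i < L \<and> g * 2 ^ i < 6 * s. 2 ^ i)"
    by (simp add: sum.If_cases lessThan_def Collect_conj_eq Int_commute)
  finally have "g * (2 * K * (\<Sum>j | j < t * L \<and> g * 2 ^ (j mod L) < 6 * s. 2 ^ (j mod L)))
      = 2 * K * t * (g * (\<Sum>i | i < L \<and> g * 2 ^ i < 6 * s. 2 ^ i))"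
    by (simp add: mult_ac)
  also have "\<dots> \<le> 2 * K * t * (2 * (6 * s))"
    by (intro mult_le_mono2 sum_two_powers_below_le)
  also have "\<dots> = (24 * K * t) * s"
    by simp
  also have "\<dots> \<le> g * s"
    using g(2) by (rule mult_le_mono1)
  finally show ?thesis
    using g(1) by simp
qed

lemma bucket_graph_exists:
  fixes K L t g N :: nat and B :: real
  assumes K: "1 \<le> K" and L: "1 \<le> L" and g: "1 \<le> g" "24 * K * t \<le> g" "real g \<le> B"
    and N: "2 * (t * L * 2 ^ L) \<le> N" "real N ^ (2 * K + 2) < 2 ^ g"
  shows "\<exists>E. simple_graph {..<N} E \<and> real (t * L) \<le> avg_degree {..<N} E \<and>
    (\<forall>W E' d'. subgraph W E' {..<N} E \<and> W \<noteq> {} \<and>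
        (\<forall>v\<in>W. d' \<le> real (degree E' v) \<and> real (degree E' v) \<le> real K * d') \<longrightarrow> d' \<le> B)"
proof -
  define l where "l = t * L"
  define w where "w = (2::nat) ^ L"
  define n where "n = N - l * w"
  define m where "m j = (2::nat) ^ (j mod L)" for j
  have m_le_w: "m j \<le> w" for j
    unfolding m_def w_def using L by (intro power_increasing) auto
  have n: "n + l * w = N" "n \<le> N" "N \<le> 2 * n"
    using N(1) by (auto simp: n_def l_def w_def)
  have "card (buckets l m) = (\<Sum>j<l. m j)"
    by (simp add: buckets_def)
  also have "\<dots> \<le> l * w"
    using sum_mono[of "{..<l}" m "\<lambda>_. w"] m_le_w by simp
  finally have "card (buckets l m) \<le> N"
    using n(1) by linarith
  then obtain f where f: "f \<in> bucket_maps l n m"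
    and good: "\<forall>S\<subseteq>{..<n}. S \<noteq> {} \<longrightarrow> K * card (rich_buckets l m f g S) < card S"
    using exists_good_bucket_map[of m K g n N l] narrow_blocks_sum_le[OF g(1,2)] K g n(2) N(2)
    unfolding m_def l_def by auto
  show ?thesis
  proof (intro exI conjI allI impI)
    show "simple_graph {..<N} (bucket_graph n w l f)"
      using bucket_graph_simple[OF f m_le_w] n(1) by simp
    have "l * N \<le> 2 * card (bucket_graph n w l f)"
      using card_bucket_graph[OF f m_le_w] mult_le_mono2[OF n(3), of l] by (simp add: mult_ac)
    then have "real l * real N \<le> 2 * real (card (bucket_graph n w l f))"
      by (metis of_nat_le_iff of_nat_mult of_nat_numeral)
    moreover have "N = 0 \<Longrightarrow> l = 0"
      using N(1) by (simp add: l_def)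
    ultimately show "real (t * L) \<le> avg_degree {..<N} (bucket_graph n w l f)"
      unfolding avg_degree_def l_def by (cases "N = 0") (auto simp: pos_le_divide_eq)
  next
    fix W E' and d' :: real
    assume "subgraph W E' {..<N} (bucket_graph n w l f) \<and> W \<noteq> {} \<and>
        (\<forall>v\<in>W. d' \<le> real (degree E' v) \<and> real (degree E' v) \<le> real K * d')"
    then have "d' \<le> real g"
      using bucket_graph_degree_bound[OF f m_le_w good] by blast
    then show "d' \<le> B"
      using g(3) by linarith
  qed
qed

section \<open>Choice of the parameters\<close>

lemma eventually_log_bounds:
  fixes \<epsilon> :: real and K :: nat
  assumes "0 < \<epsilon>" "\<epsilon> < 1"
  shows "\<exists>N0::nat. \<forall>N\<ge>N0. 5 \<le> (1 - \<epsilon>) * log 2 (real N)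
    \<and> (2 * real K + 4) * (log 2 (real N))\<^sup>2 \<le> real N powr \<epsilon>"
proof -
  have "\<forall>\<^sub>F x in at_top. 5 \<le> (1 - \<epsilon>) * (ln x / ln 2)"
    using assms by real_asymp
  moreover have "\<forall>\<^sub>F x in at_top. (2 * real K + 4) * (ln x / ln 2)\<^sup>2 \<le> x powr \<epsilon>"
    using assms by real_asymp
  ultimately have "\<forall>\<^sub>F x in at_top. 5 \<le> (1 - \<epsilon>) * log 2 x \<and> (2 * real K + 4) * (log 2 x)\<^sup>2 \<le> x powr \<epsilon>"
    unfolding log_def by eventually_elim auto
  then have "\<forall>\<^sub>F N in sequentially. 5 \<le> (1 - \<epsilon>) * log 2 (real N)
      \<and> (2 * real K + 4) * (log 2 (real N))\<^sup>2 \<le> real N powr \<epsilon>"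
    using filterlim_real_sequentially by (rule eventually_compose_filterlim)
  then show ?thesis
    unfolding eventually_sequentially by blast
qed

lemma ceiling_divide_mult_bounds:
  fixes d :: real and L :: nat
  assumes "0 < L" "real L \<le> d"
  shows "d \<le> real (nat \<lceil>d / L\<rceil> * L)" "real (nat \<lceil>d / L\<rceil> * L) \<le> 2 * d"
    "real (nat \<lceil>d / L\<rceil>) \<le> d / L + 1"
proof -
  have t: "real (nat \<lceil>d / L\<rceil>) = of_int \<lceil>d / L\<rceil>"
    using assms by (simp add: ceiling_le_zero le_divide_eq)
  then show "real (nat \<lceil>d / L\<rceil>) \<le> d / L + 1"
    by linarith
  then have "real (nat \<lceil>d / L\<rceil>) * L \<le> d + L"
    using assms(1) by (simp add: field_simps)
  then show "real (nat \<lceil>d / L\<rceil> * L) \<le> 2 * d"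
    using assms(2) by simp
  have "d / L \<le> real (nat \<lceil>d / L\<rceil>)"
    unfolding t by (rule le_of_int_ceiling)
  then show "d \<le> real (nat \<lceil>d / L\<rceil> * L)"
    using assms(1) by (simp add: divide_le_eq)
qed

lemma power_less_two_power:
  fixes x :: real
  assumes "0 < x" "real k * log 2 x < real g"
  shows "x ^ k < 2 ^ g"
proof -
  have "x ^ k = (2 powr log 2 x) powr real k"
    using assms(1) by (simp add: powr_realpow)
  also have "\<dots> = 2 powr (real k * log 2 x)"
    by (simp add: powr_powr mult.commute)
  also have "\<dots> < 2 powr real g"
    using assms(2) by (intro powr_less_mono) auto
  finally show ?thesis
    by (simp add: powr_realpow)
qed

lemma floor_parameter_bounds:
  fixes K t :: nat and r lg :: real
  assumes K: "1 \<le> K" and r: "(2 * real K + 4) * lg \<le> r" "real t \<le> r + 1" and lg: "1 \<le> lg"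
  shows "24 * K * t \<le> nat \<lfloor>64 * real K ^ 3 * r\<rfloor>"
    "(2 * real K + 2) * lg < real (nat \<lfloor>64 * real K ^ 3 * r\<rfloor>)"
proof -
  define g where "g = nat \<lfloor>64 * real K ^ 3 * r\<rfloor>"
  have K_real: "1 \<le> real K"
    using K by simp
  have "6 \<le> 2 * real K + 4"
    using K_real by simp
  also have "\<dots> \<le> (2 * real K + 4) * lg"
    using lg K_real by (simp add: mult_le_cancel_left1)
  also have "\<dots> \<le> r"
    by (rule r(1))
  finally have "6 \<le> r" .
  have "1 \<le> real K * real K"
    using K_real mult_mono[of 1 "real K" 1 "real K"] by simp
  then have "real K * 1 \<le> real K * (real K * real K)"
    using K_real by (intro mult_left_mono) auto
  then have "64 * real K * r \<le> 64 * real K ^ 3 * r"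
    using \<open>6 \<le> r\<close> by (intro mult_right_mono) (auto simp: power3_eq_cube)
  then have g: "64 * (real K * r) - 1 < real g"
    unfolding g_def by linarith
  have "real K * real t \<le> real K * (r + 1)"
    using r(2) by (rule mult_left_mono) simp
  moreover have "real K * 6 \<le> real K * r"
    using \<open>6 \<le> r\<close> by (rule mult_left_mono) simp
  ultimately have "24 * (real K * real t) < real g"
    using g K_real unfolding distrib_left by linarith
  then have "real (24 * K * t) < real g"
    by simp
  then show "24 * K * t \<le> g"
    by linarith
  have "1 * r \<le> real K * r"
    using K_real \<open>6 \<le> r\<close> by (intro mult_right_mono) auto
  moreover have "0 \<le> real K * lg"
    using lg by simp
  ultimately show "(2 * real K + 2) * lg < real g"
    using g r(1) lg unfolding distrib_right by linarith
qed

lemma four_powr_mult_two_power_floor_le: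
  fixes x \<epsilon> :: real
  assumes "0 < x" "0 \<le> (1 - \<epsilon>) * log 2 x - 2"
  shows "4 * x powr \<epsilon> * 2 ^ nat \<lfloor>(1 - \<epsilon>) * log 2 x - 2\<rfloor> \<le> x"
proof -
  have "(2::real) ^ nat \<lfloor>(1 - \<epsilon>) * log 2 x - 2\<rfloor> = 2 powr real (nat \<lfloor>(1 - \<epsilon>) * log 2 x - 2\<rfloor>)"
    by (simp add: powr_realpow)
  also have "\<dots> \<le> 2 powr ((1 - \<epsilon>) * log 2 x - 2)"
    using assms(2) by (intro powr_mono) auto
  also have "\<dots> = 2 powr ((1 - \<epsilon>) * log 2 x) / 4"
    by (simp add: powr_diff)
  also have "2 powr ((1 - \<epsilon>) * log 2 x) = (2 powr log 2 x) powr (1 - \<epsilon>)"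
    by (simp add: powr_powr mult.commute)
  also have "\<dots> = x / x powr \<epsilon>"
    using assms(1) by (simp add: powr_diff)
  finally show ?thesis
    using assms(1) by (simp add: field_simps)
qed

lemma block_length_bounds:
  fixes x \<epsilon> :: real and K :: nat
  assumes x: "0 \<le> x" and \<epsilon>: "0 < \<epsilon>" "\<epsilon> < 1"
    and large: "5 \<le> (1 - \<epsilon>) * log 2 x" "(2 * real K + 4) * (log 2 x)\<^sup>2 \<le> x powr \<epsilon>"
  defines "L \<equiv> nat \<lfloor>(1 - \<epsilon>) * log 2 x - 2\<rfloor>"
  shows "0 < x" "5 \<le> log 2 x" "3 \<le> L" "real_of_int \<lfloor>(1 - \<epsilon>) * log 2 x - 2\<rfloor> = real L"
    "real L \<le> x powr \<epsilon>" "(2 * real K + 4) * log 2 x \<le> x powr \<epsilon> / real L"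
    "4 * x powr \<epsilon> * 2 ^ L \<le> x"
proof -
  have "0 \<le> log 2 x"
  proof (rule ccontr)
    assume "\<not> 0 \<le> log 2 x"
    then have "(1 - \<epsilon>) * log 2 x < 0"
      using \<epsilon>(2) by (simp add: mult_pos_neg)
    with large(1) show False
      by simp
  qed
  then have "0 \<le> \<epsilon> * log 2 x"
    using \<epsilon>(1) by simp
  then show lg: "5 \<le> log 2 x"
    using large(1) by (simp add: algebra_simps)
  have "log 2 x * 1 \<le> log 2 x * log 2 x" "1 * (log 2 x * log 2 x) \<le> (2 * real K + 4) * (log 2 x * log 2 x)"
    using lg by (intro mult_left_mono mult_right_mono; simp)+
  then have "log 2 x \<le> x powr \<epsilon>" "0 < x powr \<epsilon>"
    using large(2) lg unfolding power2_eq_square by linarith+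
  then show "0 < x"
    using x by (cases "x = 0") auto
  have "3 \<le> (1 - \<epsilon>) * log 2 x - 2" "(1 - \<epsilon>) * log 2 x - 2 \<le> log 2 x"
    using large(1) \<open>0 \<le> \<epsilon> * log 2 x\<close> by (simp_all add: algebra_simps)
  then show "real_of_int \<lfloor>(1 - \<epsilon>) * log 2 x - 2\<rfloor> = real L" and "3 \<le> L"
    unfolding L_def by (simp_all add: le_nat_iff le_floor_iff)
  with \<open>(1 - \<epsilon>) * log 2 x - 2 \<le> log 2 x\<close> have L_le: "real L \<le> log 2 x"
    by linarith
  then show "real L \<le> x powr \<epsilon>"
    using \<open>log 2 x \<le> x powr \<epsilon>\<close> by linarith
  have "real L * ((2 * real K + 4) * log 2 x) \<le> log 2 x * ((2 * real K + 4) * log 2 x)"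
    using L_le lg by (intro mult_right_mono) auto
  also have "\<dots> \<le> x powr \<epsilon>"
    using large(2) by (simp add: power2_eq_square mult_ac)
  finally show "(2 * real K + 4) * log 2 x \<le> x powr \<epsilon> / real L"
    using \<open>3 \<le> L\<close> by (simp add: pos_le_divide_eq mult.commute)
  show "4 * x powr \<epsilon> * 2 ^ L \<le> x"
    unfolding L_def using four_powr_mult_two_power_floor_le \<open>0 < x\<close> \<open>3 \<le> (1 - \<epsilon>) * log 2 x - 2\<close> by simp
qed

lemma parameters_exist:
  fixes \<epsilon> :: real and K N :: nat
  assumes \<epsilon>: "0 < \<epsilon>" "\<epsilon> < 1" and K: "1 \<le> K"
    and large: "5 \<le> (1 - \<epsilon>) * log 2 (real N)" "(2 * real K + 4) * (log 2 (real N))\<^sup>2 \<le> real N powr \<epsilon>"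
  obtains L t g :: nat where "1 \<le> L" "1 \<le> g" "24 * K * t \<le> g" "2 * (t * L * 2 ^ L) \<le> N"
    "real N ^ (2 * K + 2) < 2 ^ g" "real N powr \<epsilon> \<le> real (t * L)"
    "real g \<le> 64 * real K ^ 3 * real N powr \<epsilon> / real_of_int \<lfloor>(1 - \<epsilon>) * log 2 (real N) - 2\<rfloor>"
proof -
  define d where "d = real N powr \<epsilon>"
  define L where "L = nat \<lfloor>(1 - \<epsilon>) * log 2 (real N) - 2\<rfloor>"
  define t where "t = nat \<lceil>d / L\<rceil>"
  define g where "g = nat \<lfloor>64 * real K ^ 3 * (d / L)\<rfloor>"
  note L = block_length_bounds[OF of_nat_0_le_iff \<epsilon> large, folded d_def L_def]
  have t: "d \<le> real (t * L)" "real (t * L) \<le> 2 * d" "real t \<le> d / L + 1"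
    using ceiling_divide_mult_bounds[of L d] L unfolding t_def by auto
  have g: "24 * K * t \<le> g" "(2 * real K + 2) * log 2 (real N) < real g"
    using floor_parameter_bounds[OF K L(6) t(3)] L(2) unfolding g_def by auto
  show ?thesis
  proof
    show "1 \<le> L" "24 * K * t \<le> g" "real N powr \<epsilon> \<le> real (t * L)"
      using L(3) g t(1) by (auto simp: d_def)
    have "0 \<le> (2 * real K + 2) * log 2 (real N)"
      using L(2) by simp
    with g(2) show "1 \<le> g"
      by simp
    have "real (2 * (t * L * 2 ^ L)) \<le> 4 * d * 2 ^ L"
      using t(2) by (simp add: mult.commute)
    with L(7) show "2 * (t * L * 2 ^ L) \<le> N"
      by linarith
    have "real (2 * K + 2) * log 2 (real N) < real g"
      using g(2) by (simp add: add.commute)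
    with L(1) show "real N ^ (2 * K + 2) < 2 ^ g"
      by (rule power_less_two_power)
    have "real g \<le> 64 * real K ^ 3 * (d / L)"
      unfolding g_def using L by (simp add: of_nat_floor d_def)
    with L(4) show "real g \<le> 64 * real K ^ 3 * real N powr \<epsilon> / real_of_int \<lfloor>(1 - \<epsilon>) * log 2 (real N) - 2\<rfloor>"
      by (simp add: d_def)
  qed
qed

lemma exists_graph_with_degree_ratio_bound:
  fixes \<epsilon> :: real and K N :: nat
  assumes "0 < \<epsilon>" "\<epsilon> < 1" "1 \<le> K"
    and "5 \<le> (1 - \<epsilon>) * log 2 (real N)" "(2 * real K + 4) * (log 2 (real N))\<^sup>2 \<le> real N powr \<epsilon>"
  shows "\<exists>E. simple_graph {..<N} E \<and> avg_degree {..<N} E \<ge> real N powr \<epsilon> \<and>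
    (\<forall>W E' (d'::real). subgraph W E' {..<N} E \<and> W \<noteq> {} \<and>
        (\<forall>v\<in>W. d' \<le> real (degree E' v) \<and> real (degree E' v) \<le> real K * d')
      \<longrightarrow> d' \<le> 64 * real K ^ 3 * real N powr \<epsilon> / real_of_int \<lfloor>(1 - \<epsilon>) * log 2 (real N) - 2\<rfloor>)"
proof -
  obtain L t g where params: "1 \<le> L" "1 \<le> g" "24 * K * t \<le> g"
    "real g \<le> 64 * real K ^ 3 * real N powr \<epsilon> / real_of_int \<lfloor>(1 - \<epsilon>) * log 2 (real N) - 2\<rfloor>"
    "2 * (t * L * 2 ^ L) \<le> N" "real N ^ (2 * K + 2) < 2 ^ g" and degree: "real N powr \<epsilon> \<le> real (t * L)"
    using parameters_exist[OF assms] by blast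
  from bucket_graph_exists[OF assms(3) params] obtain E where "simple_graph {..<N} E"
    "real (t * L) \<le> avg_degree {..<N} E"
    "\<forall>W E' d'. subgraph W E' {..<N} E \<and> W \<noteq> {} \<and>
        (\<forall>v\<in>W. d' \<le> real (degree E' v) \<and> real (degree E' v) \<le> real K * d')
      \<longrightarrow> d' \<le> 64 * real K ^ 3 * real N powr \<epsilon> / real_of_int \<lfloor>(1 - \<epsilon>) * log 2 (real N) - 2\<rfloor>"
    by blast
  with degree show ?thesis
    by (blast intro: order.trans)
qed

theorem propositionA1:
  fixes \<epsilon> :: real and K :: nat
  assumes "0 < \<epsilon>" "\<epsilon> < 1" "K \<ge> 1"
  shows "\<exists>N0::nat. \<forall>N\<ge>N0. \<exists>E :: nat set set.
           simple_graph {..<N} E \<and>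
           avg_degree {..<N} E \<ge> real N powr \<epsilon> \<and>
           (\<forall>W E' (d'::real). subgraph W E' {..<N} E \<and> W \<noteq> {} \<and>
                (\<forall>v\<in>W. d' \<le> real (degree E' v) \<and> real (degree E' v) \<le> real K * d')
              \<longrightarrow> d' \<le> 64 * real K ^ 3 * real N powr \<epsilon> /
                       real_of_int \<lfloor>(1 - \<epsilon>) * log 2 (real N) - 2\<rfloor>)"
proof -
  obtain N0 :: nat where "\<forall>N\<ge>N0. 5 \<le> (1 - \<epsilon>) * log 2 (real N)
      \<and> (2 * real K + 4) * (log 2 (real N))\<^sup>2 \<le> real N powr \<epsilon>"
    using eventually_log_bounds[OF assms(1,2)] by blast
  then show ?thesis
    using exists_graph_with_degree_ratio_bound[OF assms] by blast
qed

end
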